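(* For all integers $n\ge0$ and $p\ge0$, $$\mathcal{B}_{n+1,p}=(n+1)\mathcal{B}_{n,p}-\sum_{k=0}^{n-2}\binom{n}{k}(-1)^{n-k}\mathcal{B}_{k+1,p}-\frac{p}{p+1}\mathcal{B}_{n,p+1},$$ with $\mathcal{B}_{0,p}=1$ (the sum being empty when $n\le1$).
   Context: For an integer $p\ge0$, the $p$-Bell numbers $\mathcal{B}_{n,p}$ are defined by $\sum_{n\ge0}\mathcal{B}_{n,p}\frac{z^n}{n!}=\sum_{n\ge0}\binom{n+p}{p}^{-1}\frac{(e^z-1)^n}{n!}$. *)

theory Defs
  imports "HOL-Computational_Algebra.Formal_Power_Series"
begin

text \<open>Since (e^z-1)^k has order k, only the terms k \<le> n contribute to the coefficient
  of z^n, so the (formally infinite) sum is truncated at k = n.\<close>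

definition pBell_egf_partial :: "nat \<Rightarrow> nat \<Rightarrow> real fps" where
  "pBell_egf_partial N p =
     (\<Sum>k\<le>N. fps_const (1 / real ((k + p) choose p)) * (fps_exp 1 - 1) ^ k / fps_const (fact k))"

definition pBell :: "nat \<Rightarrow> nat \<Rightarrow> real" where
  "pBell n p = fact n * fps_nth (pBell_egf_partial n p) n"

end

theory Submission
  imports Defs
begin

text \<open>
  With the Stirling numbers S(n,k) = n! [z^n] (e^z - 1)^k / k! and c(k,p) = 1 / binom(k+p,p)
  we have B(n,p) = sum_k S(n,k) c(k,p).
  The absorption identity for binomial coefficients gives
  c(k,p) = c(k+1,p) + p/(p+1) c(k,p+1). Differentiating (e^z - 1)^(k+1)/(k+1)! yields
  e^z (e^z - 1)^k/k!, and multiplying by e^(-z) turns this into the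
  binomial inversion S(n,k) = sum_i binom(n,i) (-1)^(n-i) S(i+1,k+1).
  Hence B(n,p) = sum_i binom(n,i) (-1)^(n-i) B(i+1,p) + p/(p+1) B(n,p+1), and the
  recurrence follows by isolating the terms i = n and i = n - 1.
\<close>

unbundle fps_syntax

definition stirling_fps :: "nat \<Rightarrow> nat \<Rightarrow> real" where
  "stirling_fps n k = fact n * ((fps_exp 1 - 1) ^ k $ n) / fact k"

definition inv_choose :: "nat \<Rightarrow> nat \<Rightarrow> real" where
  "inv_choose k p = 1 / real ((k + p) choose p)"

lemma subdegree_fps_exp_minus_1: "subdegree (fps_exp 1 - 1 :: 'a :: field_char_0 fps) = 1"
  by (rule subdegreeI) auto

lemma stirling_fps_eq_0: "n < k \<Longrightarrow> stirling_fps n k = 0"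
  unfolding stirling_fps_def
  by (simp add: fps_pow_nth_below_subdegree subdegree_fps_exp_minus_1 del: subdegree_minus_commute)

lemma stirling_fps_Suc_0 [simp]: "stirling_fps (Suc n) 0 = 0"
  by (simp add: stirling_fps_def)

lemma fps_deriv_power_fps_exp_minus_1:
  "fps_deriv ((fps_exp 1 - 1) ^ Suc k :: 'a :: field_char_0 fps)
     = fps_const (of_nat (Suc k)) * (fps_exp 1 * (fps_exp 1 - 1) ^ k)"
  unfolding fps_deriv_power by (simp add: mult_ac)

lemma stirling_fps_Suc_Suc:
  "stirling_fps (Suc i) (Suc k) = fact i * ((fps_exp 1 * (fps_exp 1 - 1) ^ k) $ i) / fact k"
proof -
  have "of_nat (i + 1) * (fps_exp 1 - 1) ^ Suc k $ (i + 1)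
          = (of_nat (Suc k) :: real) * (fps_exp 1 * (fps_exp 1 - 1) ^ k) $ i"
    using fps_deriv_nth[of "(fps_exp 1 - 1 :: real fps) ^ Suc k" i]
    by (simp only: fps_deriv_power_fps_exp_minus_1 fps_mult_left_const_nth)
  then show ?thesis
    unfolding stirling_fps_def fact_Suc by (simp add: field_simps del: of_nat_Suc)
qed

lemma inv_choose_Suc:
  "inv_choose j p = inv_choose (Suc j) p + real p / real (Suc p) * inv_choose j (Suc p)"
proof -
  define C where "C = real ((j + p) choose p)"
  have "Suc j * (Suc j + p choose p) = Suc (j + p) * (j + p choose p)"
    using Suc_times_binomial[of j "j + p"] binomial_symmetric[of j "j + p"]
      binomial_symmetric[of "Suc j" "Suc (j + p)"] by simp
  then have up_j: "real (Suc j + p choose p) = real (Suc (j + p)) * C / real (Suc j)"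
    unfolding C_def by (simp add: field_simps flip: of_nat_mult del: of_nat_Suc)
  have "Suc p * (j + Suc p choose Suc p) = Suc (j + p) * (j + p choose p)"
    using Suc_times_binomial[of p "j + p"] by simp
  then have up_p: "real (j + Suc p choose Suc p) = real (Suc (j + p)) * C / real (Suc p)"
    unfolding C_def by (simp add: field_simps flip: of_nat_mult del: of_nat_Suc)
  have "inv_choose (Suc j) p + real p / real (Suc p) * inv_choose j (Suc p)
          = (real (Suc j) + real p) / (real (Suc (j + p)) * C)"
    unfolding inv_choose_def up_j up_p
    by (simp add: add_divide_distrib mult.commute del: of_nat_Suc)
  also have "\<dots> = inv_choose j p"
    by (simp add: inv_choose_def C_def add.assoc)
  finally show ?thesis ..
qed

lemma pBell_eq_sum_stirling_fps:
  assumes "n \<le> m"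
  shows "pBell n p = (\<Sum>k\<le>m. stirling_fps n k * inv_choose k p)"
proof -
  have "pBell n p = (\<Sum>k\<le>n. stirling_fps n k * inv_choose k p)"
    unfolding pBell_def pBell_egf_partial_def stirling_fps_def inv_choose_def
    by (simp add: fps_sum_nth sum_distrib_left field_simps)
  also have "\<dots> = (\<Sum>k\<le>m. stirling_fps n k * inv_choose k p)"
    using assms by (intro sum.mono_neutral_left) (auto simp: stirling_fps_eq_0)
  finally show ?thesis .
qed

lemma sum_alternating_stirling_fps_Suc:
  "(\<Sum>i\<le>n. real (n choose i) * (-1) ^ (n - i) * stirling_fps (Suc i) (Suc k))
     = stirling_fps n k"
proof -
  have "fps_exp 1 * (fps_exp 1 - 1) ^ k * fps_exp (-1)
          = (fps_exp 1 - 1) ^ k * fps_exp (1 + -1 :: real)"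
    by (simp only: fps_exp_add_mult mult_ac)
  then have exp_cancel:
      "fps_exp 1 * (fps_exp 1 - 1) ^ k * fps_exp (-1) = ((fps_exp 1 - 1) ^ k :: real fps)"
    by simp
  have "stirling_fps n k = fact n * ((fps_exp 1 * (fps_exp 1 - 1) ^ k * fps_exp (-1)) $ n) / fact k"
    by (simp only: stirling_fps_def exp_cancel)
  also have "\<dots> = fact n * (\<Sum>i=0..n. (fps_exp 1 * (fps_exp 1 - 1) ^ k) $ i
                                      * ((-1) ^ (n - i) / fact (n - i))) / fact k"
    by (simp add: fps_mult_nth)
  also have "\<dots> = (\<Sum>i\<le>n. real (n choose i) * (-1) ^ (n - i)
                        * (fact i * ((fps_exp 1 * (fps_exp 1 - 1) ^ k) $ i) / fact k))"
    by (simp add: sum_distrib_left sum_divide_distrib atMost_atLeast0 binomial_fact field_simps)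
  finally show ?thesis
    by (simp add: stirling_fps_Suc_Suc)
qed

lemma sum_alternating_pBell_Suc:
  "(\<Sum>i\<le>n. real (n choose i) * (-1) ^ (n - i) * pBell (Suc i) p)
     = (\<Sum>k\<le>n. stirling_fps n k * inv_choose (Suc k) p)"
proof -
  have "pBell (Suc i) p = (\<Sum>k\<le>n. stirling_fps (Suc i) (Suc k) * inv_choose (Suc k) p)"
    if "i \<le> n" for i
    using that pBell_eq_sum_stirling_fps[of "Suc i" "Suc n" p]
    by (simp only: sum.atMost_Suc_shift) simp
  then have "(\<Sum>i\<le>n. real (n choose i) * (-1) ^ (n - i) * pBell (Suc i) p)
     = (\<Sum>i\<le>n. \<Sum>k\<le>n. real (n choose i) * (-1) ^ (n - i)
                                * stirling_fps (Suc i) (Suc k) * inv_choose (Suc k) p)"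
    by (simp add: sum_distrib_left mult.assoc)
  also have "\<dots> = (\<Sum>k\<le>n. (\<Sum>i\<le>n. real (n choose i) * (-1) ^ (n - i)
                                     * stirling_fps (Suc i) (Suc k)) * inv_choose (Suc k) p)"
    by (subst sum.swap) (simp add: sum_distrib_right)
  finally show ?thesis
    by (simp add: sum_alternating_stirling_fps_Suc)
qed

lemma pBell_eq_sum_alternating_pBell_Suc:
  "pBell n p = (\<Sum>i\<le>n. real (n choose i) * (-1) ^ (n - i) * pBell (Suc i) p)
                + real p / real (Suc p) * pBell n (Suc p)"
proof -
  have "pBell n p = (\<Sum>k\<le>n. stirling_fps n k * inv_choose (Suc k) p)
          + real p / real (Suc p) * (\<Sum>k\<le>n. stirling_fps n k * inv_choose k (Suc p))"
    unfolding pBell_eq_sum_stirling_fps[of n n p, OF order_refl]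
    by (subst inv_choose_Suc) (simp add: algebra_simps sum.distrib sum_distrib_left)
  then show ?thesis
    by (simp only: sum_alternating_pBell_Suc
                   pBell_eq_sum_stirling_fps[of n n "Suc p", OF order_refl])
qed

theorem mainTheorem8:
  fixes n p :: nat
  shows "pBell 0 p = 1 \<and>
    pBell (n + 1) p = real (n + 1) * pBell n p
      - (\<Sum>k<n - 1. real (n choose k) * (-1) ^ (n - k) * pBell (k + 1) p)
      - real p / real (p + 1) * pBell n (p + 1)"
proof
  show "pBell 0 p = 1"
    by (simp add: pBell_eq_sum_stirling_fps[of 0 0] stirling_fps_def inv_choose_def)
  let ?a = "\<lambda>k. real (n choose k) * (-1) ^ (n - k) * pBell (k + 1) p"
  have "(\<Sum>k\<le>n. ?a k) = (\<Sum>k<n - 1. ?a k) - real n * pBell n p + pBell (n + 1) p"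
  proof (cases n)
    case (Suc m)
    then have "(\<Sum>k\<le>n. ?a k) = (\<Sum>k<m. ?a k) + ?a m + ?a n"
      by (simp add: lessThan_Suc_atMost[symmetric])
    then show ?thesis
      using Suc by (simp add: algebra_simps)
  qed simp
  moreover have "pBell n p = (\<Sum>k\<le>n. ?a k) + real p / real (p + 1) * pBell n (p + 1)"
    using pBell_eq_sum_alternating_pBell_Suc[of n p] by simp
  ultimately show "pBell (n + 1) p = real (n + 1) * pBell n p - (\<Sum>k<n - 1. ?a k)
      - real p / real (p + 1) * pBell n (p + 1)"
    by (simp only: of_nat_add of_nat_1 distrib_right mult_1)
qed

end
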